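(* For every integer $N$, the functions $$f_0(z)=q^{N}\frac{\phi_{N-1}(y,z)\,\phi_N(y/q,z)}{\phi_{N-1}(y/q,z)\,\phi_N(y,z)},\qquad f_1(z)=\frac{\phi_{N-1}(y/q,z/q)\,\phi_N(y,z)}{\phi_{N-1}(y,z)\,\phi_N(y/q,z/q)}$$ satisfy the $q$-difference Painlevé III equation $$f_1(qz)=\frac{c^2}{f_0(z)f_1(z)}\cdot\frac{1+z f_0(z)}{z+f_0(z)},\qquad f_0(z/q)=\frac{c^2}{f_0(z)f_1(z)}\cdot\frac{y/z+f_1(z)}{1+(y/z)f_1(z)}$$ with $c=q^N$ (here $y$ is a fixed parameter and $z$ the independent variable).
   Context: $q$ is a fixed nonzero complex constant that is not a root of unity; $y,z$ are variables. For $k\in\mathbb{Z}$ the polynomials $p_k(y,z)$ are defined by the generating function $\sum_{n\ge 0}p_n(y,z)t^n=\frac{(-(1-q)t;q)_\infty}{((1-q)yt;q)_\infty((1-q)zt;q)_\infty}$, with $(a;q)_\infty=\prod_{i\ge0}(1-aq^i)$, and $p_k=0$ for $k<0$; equivalently (via the $q$-binomial expansions) $p_n(y,z)=(1-q)^n\sum_{a+b+c=n}\frac{y^a z^b q^{c(c-1)/2}}{(q;q)_a(q;q)_b(q;q)_c}$ with $(q;q)_m=\prod_{j=1}^m(1-q^j)$. For $N>0$, $\phi_N(y,z)$ is the $N\times N$ determinant $\det\big(p_{N-2i+j+1}(y,z)\big)_{i,j=1}^N$ (first row $p_N,\dots,p_{2N-1}$, last row $p_{-N+2},\dots,p_1$);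 $\phi_0=1$; and for $N<0$, $\phi_N=(-1)^{N(N+1)/2}\phi_{-N-1}$. *)

theory Defs
  imports Complex_Main "Jordan_Normal_Form.Determinant"
begin

definition qpoch :: "complex \<Rightarrow> nat \<Rightarrow> complex" where
  "qpoch q m = (\<Prod>j=1..m. 1 - q ^ j)"

definition pq :: "complex \<Rightarrow> int \<Rightarrow> complex \<Rightarrow> complex \<Rightarrow> complex" where
  "pq q k y z = (if k < 0 then 0 else
     (let n = nat k in (1 - q) ^ n *
       (\<Sum>a\<in>{..n}. \<Sum>b\<in>{..n - a}. let c = n - a - b in
          y ^ a * z ^ b * q ^ (c * (c - 1) div 2) / (qpoch q a * qpoch q b * qpoch q c))))"

text \<open>For n > 0: the n x n determinant det (p_{n-2i+j+1})_{i,j=1..n};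
  with 0-based indices i,j this is p_{n-2i+j}.\<close>
definition phi_nat :: "complex \<Rightarrow> nat \<Rightarrow> complex \<Rightarrow> complex \<Rightarrow> complex" where
  "phi_nat q n y z = (if n = 0 then 1 else
     det (mat n n (\<lambda>(i, j). pq q (int n - 2 * int i + int j) y z)))"

definition phi :: "complex \<Rightarrow> int \<Rightarrow> complex \<Rightarrow> complex \<Rightarrow> complex" where
  "phi q N y z = (if N \<ge> 0 then phi_nat q (nat N) y z
     else (-1) ^ nat (N * (N + 1) div 2) * phi_nat q (nat (- N - 1)) y z)"

definition f0 :: "complex \<Rightarrow> int \<Rightarrow> complex \<Rightarrow> complex \<Rightarrow> complex" where
  "f0 q N y z = q powi N * (phi q (N - 1) y z * phi q N (y / q) z)
     / (phi q (N - 1) (y / q) z * phi q N y z)"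

definition f1 :: "complex \<Rightarrow> int \<Rightarrow> complex \<Rightarrow> complex \<Rightarrow> complex" where
  "f1 q N y z = (phi q (N - 1) (y / q) (z / q) * phi q N y z)
     / (phi q (N - 1) y z * phi q N (y / q) (z / q))"

end

theory Submission
  imports Defs "HOL-Computational_Algebra.Formal_Power_Series"
begin

text \<open>The numbers \<open>p\<^sub>k(y, z)\<close> are the coefficients of a product of three \<open>q\<close>-exponential series.
  Replacing \<open>y\<close> by \<open>y / q\<close> or \<open>z\<close> by \<open>z / q\<close> divides that product by a linear factor \<open>1 - a t\<close>,
  and rescaling \<open>(y, z)\<close> to \<open>(q y, q z)\<close> amounts to \<open>t \<mapsto> q t\<close> followed by multiplication by
  such a factor; on coefficients this factor is the difference operator \<open>s\<^sub>k \<mapsto> s\<^sub>k - a s\<^sub>k\<^sub>-\<^sub>1\<close>.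
  Now \<open>\<phi>\<^sub>N\<close> is a Jacobi--Trudi type determinant of the sequence \<open>p\<close>, and for any sequence \<open>d\<close> and
  difference operators \<open>L\<^sub>a, L\<^sub>b\<close>, column operations and the three-term Pluecker relation give two
  bilinear identities between the determinants of \<open>d, L\<^sub>a d, L\<^sub>b d, L\<^sub>a L\<^sub>b d\<close> of consecutive sizes.
  Taking \<open>(a, b) = (-\<delta>, z \<delta>)\<close> and \<open>(y \<delta>, z \<delta>)\<close> with \<open>\<delta> = (1 - q) / q\<close> yields four bilinear
  equations for \<open>\<phi>\<^sub>N\<^sub>-\<^sub>1, \<phi>\<^sub>N\<close> (the last two first for \<open>y \<noteq> z\<close>, then by continuity), and
  the symmetry \<open>\<phi>\<^sub>N = \<plusminus>\<phi>\<^sub>-\<^sub>N\<^sub>-\<^sub>1\<close> extends them to negative \<open>N\<close>. Written in terms of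
  \<open>f\<^sub>0, f\<^sub>1\<close>, the bilinear equations are the \<open>q\<close>-Painleve III system.\<close>

section \<open>Determinants given by their columns\<close>

definition det_cols :: "nat \<Rightarrow> (nat \<Rightarrow> nat \<Rightarrow> 'a::comm_ring_1) \<Rightarrow> 'a" where
  "det_cols n c = det (mat n n (\<lambda>(i, j). c j i))"

lemma det_cols_cong:
  assumes "\<And>i j. i < n \<Longrightarrow> j < n \<Longrightarrow> c j i = c' j i"
  shows "det_cols n c = det_cols n c'"
  unfolding det_cols_def by (rule arg_cong[where f = det]) (auto intro!: eq_matI simp: assms)

lemma det_cols_expand_col:
  assumes "k < n"
  shows "det_cols n c = (\<Sum>i<n. c k i * cofactor (mat n n (\<lambda>(i, j). c j i)) i k)"
  unfolding det_cols_def using assms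
  by (subst laplace_expansion_column[OF _ assms]) (auto intro!: sum.cong)

lemma cofactor_col_upd:
  "cofactor (mat n n (\<lambda>(i, j). (c(k := f)) j i)) i k = cofactor (mat n n (\<lambda>(i, j). c j i)) i k"
  unfolding cofactor_def mat_delete_def
  by (rule arg_cong[where f = "\<lambda>A. (-1) ^ (i + k) * det A"]) (auto intro!: eq_matI)

lemma det_cols_upd:
  assumes "k < n"
  shows "det_cols n (c(k := f)) = (\<Sum>i<n. f i * cofactor (mat n n (\<lambda>(i, j). c j i)) i k)"
  unfolding det_cols_expand_col[OF assms, of "c(k := f)"] cofactor_col_upd by simp

lemma det_cols_linear:
  assumes "k < n"
  shows "det_cols n (c(k := (\<lambda>i. x * u i + y * v i)))
           = x * det_cols n (c(k := u)) + y * det_cols n (c(k := v))"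
  unfolding det_cols_upd[OF assms] by (simp add: sum_distrib_left sum.distrib algebra_simps)

lemma det_cols_equal_cols:
  assumes "k < n" "l < n" "k \<noteq> l" "\<And>i. i < n \<Longrightarrow> c k i = c l i"
  shows "det_cols n c = 0"
  unfolding det_cols_def
  by (rule det_identical_columns[of _ n k l]) (auto intro!: eq_vecI simp: assms)

lemma det_cols_subtract_previous_from:
  assumes "m \<le> n"
  shows "det_cols n (\<lambda>j. if k < j \<and> m \<le> j then (\<lambda>i. c j i - a * c (j - 1) i) else c j)
           = det_cols n c"
  using assms
proof (induction "n - m" arbitrary: m)
  case 0
  then show ?case by (intro det_cols_cong) auto
next
  case (Suc x)
  let ?T = "\<lambda>m j. if k < j \<and> m \<le> j then (\<lambda>i. c j i - a * c (j - 1) i) else c j"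
  have IH: "det_cols n (?T (Suc m)) = det_cols n c"
    using Suc by auto
  show ?case
  proof (cases "k < m")
    case False
    then have "?T m = ?T (Suc m)" by (auto simp: fun_eq_iff)
    then show ?thesis using IH by simp
  next
    case True
    have m: "m < n" using Suc by auto
    let ?S = "?T (Suc m)"
    have "?T m = ?S(m := (\<lambda>i. 1 * ?S m i + (- a) * ?S (m - 1) i))"
      using True by (auto simp: fun_eq_iff)
    then have "det_cols n (?T m) = 1 * det_cols n (?S(m := ?S m)) + (- a) * det_cols n (?S(m := ?S (m - 1)))"
      by (simp only: det_cols_linear[OF m])
    also have "?S(m := ?S m) = ?S"
      by (rule fun_upd_triv)
    also have "det_cols n (?S(m := ?S (m - 1))) = 0"
      by (rule det_cols_equal_cols[of m n "m - 1"]) (use True m in auto)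
    finally show ?thesis using IH by simp
  qed
qed

lemma det_cols_subtract_previous:
  "det_cols n (\<lambda>j. if k < j then (\<lambda>i. c j i - a * c (j - 1) i) else c j) = det_cols n c"
  using det_cols_subtract_previous_from[of 0 n k c a] by simp

lemma det_cols_unit_first:
  assumes "c 0 0 = 1" "\<And>i. 0 < i \<Longrightarrow> i < Suc m \<Longrightarrow> c 0 i = 0"
  shows "det_cols (Suc m) c = det_cols m (\<lambda>j i. c (Suc j) (Suc i))"
proof -
  have "det_cols (Suc m) c = (\<Sum>i<Suc m. c 0 i * cofactor (mat (Suc m) (Suc m) (\<lambda>(i, j). c j i)) i 0)"
    by (rule det_cols_expand_col) simp
  also have "\<dots> = cofactor (mat (Suc m) (Suc m) (\<lambda>(i, j). c j i)) 0 0"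
    unfolding sum.lessThan_Suc_shift using assms by simp
  also have "\<dots> = det_cols m (\<lambda>j i. c (Suc j) (Suc i))"
    unfolding cofactor_def mat_delete_def det_cols_def
    by (auto intro!: arg_cong[where f = det] eq_matI)
  finally show ?thesis .
qed

lemma det_cols_unit_last:
  assumes "c m m = 1" "\<And>j. j < m \<Longrightarrow> c j m = 0"
  shows "det_cols (Suc m) c = det_cols m c"
proof -
  let ?A = "mat (Suc m) (Suc m) (\<lambda>(i, j). c j i)"
  have "det_cols (Suc m) c = (\<Sum>j<Suc m. ?A $$ (m, j) * cofactor ?A m j)"
    unfolding det_cols_def by (rule laplace_expansion_row) auto
  also have "\<dots> = cofactor ?A m m"
    unfolding sum.lessThan_Suc using assms by simp
  also have "\<dots> = det_cols m c"
    unfolding cofactor_def mat_delete_def det_cols_def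
    by (auto intro!: arg_cong[where f = det] eq_matI)
  finally show ?thesis .
qed

lemma det_cols_rotate:
  "det_cols (Suc m) c = (-1) ^ m * det_cols (Suc m) (\<lambda>j. if j = 0 then c m else c (j - 1))"
proof -
  let ?A = "mat (Suc m) (Suc m) (\<lambda>(i, j). c j i)"
  have "swap_col_to_front ?A m = mat (Suc m) (Suc m) (\<lambda>(i, j). (if j = 0 then c m else c (j - 1)) i)"
    by (subst swap_col_to_front_result[of _ "Suc m" "Suc m"]) (auto intro!: eq_matI)
  moreover have "det (swap_col_to_front ?A m) = (-1) ^ m * det ?A"
    by (rule swap_col_to_front_det) auto
  ultimately show ?thesis
    unfolding det_cols_def by (simp add: mult.assoc flip: power_add mult_2)
qed

text \<open>Laplace expansion along a duplicated row of an \<open>(n+1) \<times> (n+1)\<close> matrix with columns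
  \<open>v 0, \<dots>, v n\<close>.\<close>

lemma det_cols_delete_alternating_sum:
  assumes "r < n"
  shows "(\<Sum>j<Suc n. (-1) ^ j * v j r * det_cols n (\<lambda>j'. if j' < j then v j' else v (Suc j'))) = 0"
proof -
  let ?A = "mat (Suc n) (Suc n) (\<lambda>(i, j). if i = 0 then v j r else v j (i - 1))"
  have "det ?A = 0"
    by (rule det_identical_rows[of _ "Suc n" 0 "Suc r"]) (use assms in \<open>auto intro!: eq_vecI\<close>)
  moreover have "det ?A = (\<Sum>j<Suc n. ?A $$ (0, j) * cofactor ?A 0 j)"
    by (rule laplace_expansion_row) auto
  moreover have "cofactor ?A 0 j = (-1) ^ j * det_cols n (\<lambda>j'. if j' < j then v j' else v (Suc j'))" for j
    unfolding cofactor_def mat_delete_def det_cols_def add_0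
    by (rule arg_cong[where f = "\<lambda>A. (-1) ^ j * det A"]) (auto intro!: eq_matI)
  ultimately show ?thesis by (simp add: mult.assoc mult.left_commute)
qed

definition det_cols2 ::
    "nat \<Rightarrow> (nat \<Rightarrow> nat \<Rightarrow> 'a::comm_ring_1) \<Rightarrow> (nat \<Rightarrow> 'a) \<Rightarrow> (nat \<Rightarrow> 'a) \<Rightarrow> 'a" where
  "det_cols2 n F x y = det_cols n (F(0 := x, 1 := y))"

lemma det_cols2_linear_left:
  assumes "2 \<le> n"
  shows "det_cols2 n F (\<lambda>i. c1 * x1 i + c2 * x2 i) y = c1 * det_cols2 n F x1 y + c2 * det_cols2 n F x2 y"
proof -
  have "F(0 := x, 1 := y) = (F(1 := y))(0 := x)" for x
    by (auto simp: fun_eq_iff)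
  then show ?thesis
    unfolding det_cols2_def using det_cols_linear[of 0 n "F(1 := y)"] assms by simp
qed

lemma det_cols2_linear_right:
  assumes "2 \<le> n"
  shows "det_cols2 n F x (\<lambda>i. c1 * y1 i + c2 * y2 i) = c1 * det_cols2 n F x y1 + c2 * det_cols2 n F x y2"
  unfolding det_cols2_def by (rule det_cols_linear) (use assms in auto)

lemma det_cols2_self:
  assumes "2 \<le> n"
  shows "det_cols2 n F x x = 0"
  unfolding det_cols2_def by (rule det_cols_equal_cols[of 0 n 1]) (use assms in auto)

lemma det_cols2_swap:
  assumes "2 \<le> n"
  shows "det_cols2 n F y x = - det_cols2 n F x y"
proof -
  let ?P = "det_cols2 n F"
  have "0 = ?P (\<lambda>i. 1 * x i + 1 * y i) (\<lambda>i. 1 * x i + 1 * y i)"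
    using det_cols2_self[OF assms] by simp
  also have "\<dots> = ?P x x + ?P x y + ?P y x + ?P y y"
    unfolding det_cols2_linear_left[OF assms] det_cols2_linear_right[OF assms] by simp
  finally have "?P x y + ?P y x = 0"
    by (simp add: det_cols2_self[OF assms])
  then show ?thesis by (simp add: add_eq_0_iff)
qed

lemma det_cols2_col:
  assumes "2 \<le> k" "k < n"
  shows "det_cols2 n F x (F k) = 0"
  unfolding det_cols2_def by (rule det_cols_equal_cols[of 1 n k]) (use assms in auto)

text \<open>The three-term Pluecker relation: expand \<open>det_cols2 n F x\<close> along its second column in the
  alternating sum of minors of the \<open>n + 1\<close> columns \<open>y, u, w, F 2, \<dots>, F (n - 1)\<close>.\<close>

lemma det_cols2_pluecker:
  assumes n: "2 \<le> n"
  shows "det_cols2 n F x y * det_cols2 n F u w - det_cols2 n F x u * det_cols2 n F y w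
           + det_cols2 n F x w * det_cols2 n F y u = 0"
proof -
  let ?P = "det_cols2 n F"
  define v where "v = (\<lambda>j::nat. if j = 0 then y else if j = 1 then u else if j = 2 then w else F (j - 1))"
  define D where "D = (\<lambda>j. det_cols n (\<lambda>j'. if j' < j then v j' else v (Suc j')))"
  define C where "C = (\<lambda>r. cofactor (mat n n (\<lambda>(i, j). (F(0 := x)) j i)) r 1)"
  have P_x: "?P x t = (\<Sum>r<n. t r * C r)" for t
    unfolding det_cols2_def C_def by (rule det_cols_upd) (use n in auto)
  have "(\<Sum>j<Suc n. (-1) ^ j * v j r * D j) = 0" if "r < n" for r
    unfolding D_def by (rule det_cols_delete_alternating_sum[OF that])
  then have "0 = (\<Sum>r<n. C r * (\<Sum>j<Suc n. (-1) ^ j * v j r * D j))"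
    by simp
  also have "\<dots> = (\<Sum>j<Suc n. (-1) ^ j * D j * (\<Sum>r<n. v j r * C r))"
    unfolding sum_distrib_left
    by (subst sum.swap) (rule sum.cong[OF refl], rule sum.cong[OF refl], simp only: mult_ac)
  also have "\<dots> = (\<Sum>j<Suc n. (-1) ^ j * D j * ?P x (v j))"
    by (simp add: P_x)
  also have "\<dots> = (\<Sum>j\<in>{0, 1, 2}. (-1) ^ j * D j * ?P x (v j))"
  proof (rule sum.mono_neutral_right)
    have "?P x (v j) = 0" if "j \<in> {..<Suc n} - {0, 1, 2}" for j
      using that det_cols2_col[of "j - 1" n F x] by (auto simp: v_def)
    then show "\<forall>j\<in>{..<Suc n} - {0, 1, 2}. (-1) ^ j * D j * ?P x (v j) = 0"
      by simp
  qed (use n in auto)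
  also have "\<dots> = D 0 * ?P x y - D 1 * ?P x u + D 2 * ?P x w"
    by (simp add: v_def)
  finally have "D 0 * ?P x y - D 1 * ?P x u + D 2 * ?P x w = 0" by simp
  moreover have "D 0 = ?P u w" "D 1 = ?P y w" "D 2 = ?P y u"
    unfolding D_def det_cols2_def by (auto intro!: det_cols_cong simp: v_def)
  ultimately show ?thesis by (simp add: algebra_simps)
qed

lemma det_cols2_three_term:
  assumes n: "2 \<le> n" and comb: "\<And>i. a * x i - b * y i = (a - b) * d i"
  shows "(a - b) * det_cols2 n F w u * det_cols2 n F d (\<lambda>i. u i + b * y i)
           = a * det_cols2 n F x u * det_cols2 n F w (\<lambda>i. u i + b * y i)
             - b * det_cols2 n F y u * det_cols2 n F w (\<lambda>i. u i + a * x i)"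
proof -
  let ?P = "det_cols2 n F"
  have add_right: "?P s (\<lambda>i. u i + c * t i) = ?P s u + c * ?P s t" for s t c
    using det_cols2_linear_right[OF n, of F s 1 u c t] by simp
  have "(\<lambda>i. (a - b) * d i + 0 * d i) = (\<lambda>i. a * x i + (- b) * y i)"
    using comb by (simp add: fun_eq_iff)
  then have "(a - b) * ?P d t = a * ?P x t - b * ?P y t" for t
    using det_cols2_linear_left[OF n, of F "a - b" d 0 d t] det_cols2_linear_left[OF n, of F a x "- b" y t]
    by simp
  then have "(a - b) * ?P d (\<lambda>i. u i + b * y i)
      = a * ?P x (\<lambda>i. u i + b * y i) - b * ?P y (\<lambda>i. u i + b * y i)" .
  also have "\<dots> = a * ?P x u + a * b * ?P x y - b * ?P y u"
    unfolding add_right det_cols2_self[OF n] by (simp add: algebra_simps)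
  finally have d_col: "(a - b) * ?P d (\<lambda>i. u i + b * y i) = a * ?P x u + a * b * ?P x y - b * ?P y u" .
  have pl: "?P w u * ?P x y = ?P x u * ?P w y - ?P y u * ?P w x"
    using det_cols2_pluecker[OF n, of F w u x y] unfolding det_cols2_swap[OF n, of F u]
    by (simp add: algebra_simps)
  have "(a - b) * ?P w u * ?P d (\<lambda>i. u i + b * y i) = ?P w u * ((a - b) * ?P d (\<lambda>i. u i + b * y i))"
    by (simp only: ac_simps)
  also have "\<dots> = a * ?P x u * ?P w u + a * b * (?P w u * ?P x y) - b * ?P y u * ?P w u"
    unfolding d_col by (simp add: algebra_simps)
  also have "\<dots> = a * ?P x u * ?P w (\<lambda>i. u i + b * y i) - b * ?P y u * ?P w (\<lambda>i. u i + a * x i)"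
    unfolding pl add_right by (simp add: algebra_simps)
  finally show ?thesis .
qed

section \<open>Staircase determinants and difference operators\<close>

text \<open>\<open>staircase_det n s\<close> is \<open>det (s (n - 2 i + j))\<close> for \<open>0 \<le> i, j < n\<close>: the Jacobi--Trudi
  determinant of the staircase partition \<open>(n, n - 1, \<dots>, 1)\<close>, with \<open>s\<close> in place of the complete
  symmetric functions.\<close>

definition staircase_col :: "nat \<Rightarrow> (int \<Rightarrow> 'a) \<Rightarrow> int \<Rightarrow> nat \<Rightarrow> 'a" where
  "staircase_col n s j i = s (int n - 2 * int i + j)"

definition staircase_det :: "nat \<Rightarrow> (int \<Rightarrow> 'a::comm_ring_1) \<Rightarrow> 'a" where
  "staircase_det n s = det_cols n (\<lambda>j. staircase_col n s (int j))"

definition diff_op :: "'a::comm_ring_1 \<Rightarrow> (int \<Rightarrow> 'a) \<Rightarrow> int \<Rightarrow> 'a" where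
  "diff_op a s k = s k - a * s (k - 1)"

definition normalized_seq :: "(int \<Rightarrow> 'a::comm_ring_1) \<Rightarrow> bool" where
  "normalized_seq s \<longleftrightarrow> s 0 = 1 \<and> (\<forall>k<0. s k = 0)"

lemma diff_op_0 [simp]: "diff_op 0 s = s"
  by (simp add: fun_eq_iff diff_op_def)

lemma diff_op_commute: "diff_op a (diff_op b s) = diff_op b (diff_op a s)"
  by (simp add: fun_eq_iff diff_op_def algebra_simps)

lemma normalized_seq_diff_op: "normalized_seq s \<Longrightarrow> normalized_seq (diff_op a s)"
  by (simp add: normalized_seq_def diff_op_def)

lemma staircase_col_diff_op:
  "staircase_col n (diff_op a s) j i = staircase_col n s j i - a * staircase_col n s (j - 1) i"
  by (simp add: staircase_col_def diff_op_def algebra_simps)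

lemma staircase_det_0 [simp]: "staircase_det 0 s = 1"
  by (simp add: staircase_det_def det_cols_def)

lemma staircase_det_Suc_0: "staircase_det (Suc 0) s = s 1"
  by (simp add: staircase_det_def det_cols_def det_single staircase_col_def)

text \<open>Subtracting \<open>a\<close> times each column from the next one turns columns of \<open>s\<close> into columns
  of \<open>diff_op a s\<close>. This lets all determinants in one bilinear identity below share their
  columns \<open>2, \<dots>, n - 1\<close>.\<close>

lemma det_cols_staircase_diff:
  "det_cols n (\<lambda>j. if j < k then c j else staircase_col n s (int j + r))
     = det_cols n (\<lambda>j. if j < k then c j else if j = k then staircase_col n s (int k + r)
                       else staircase_col n (diff_op a s) (int j + r))"
  by (subst det_cols_subtract_previous[of n k _ a, symmetric])
    (auto intro!: det_cols_cong simp: staircase_col_diff_op of_nat_diff algebra_simps)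

lemma staircase_det_diff_cols:
  "staircase_det n s = det_cols n (\<lambda>j. if j = 0 then staircase_col n s 0
                                       else staircase_col n (diff_op a s) (int j))"
  using det_cols_staircase_diff[of n 0 undefined s 0 a] unfolding add_0_right of_nat_0
  by (simp add: staircase_det_def)

lemma staircase_det_diff2_cols:
  "staircase_det n s = det_cols2 n (\<lambda>j. staircase_col n (diff_op b (diff_op a s)) (int j))
                         (staircase_col n s 0) (staircase_col n (diff_op a s) 1)"
proof -
  have "staircase_det n s = det_cols n (\<lambda>j. if j < 1 then staircase_col n s 0
                                          else staircase_col n (diff_op a s) (int j + 0))"
    unfolding staircase_det_diff_cols[of n s a] by (rule det_cols_cong) auto
  also have "\<dots> = det_cols2 n (\<lambda>j. staircase_col n (diff_op b (diff_op a s)) (int j))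
                    (staircase_col n s 0) (staircase_col n (diff_op a s) 1)"
    unfolding det_cols_staircase_diff[where a = b] det_cols2_def by (rule det_cols_cong) auto
  finally show ?thesis .
qed

lemma staircase_det_diff1_cols:
  "staircase_det n s = det_cols2 n (\<lambda>j. staircase_col n (diff_op a s) (int j))
                         (staircase_col n s 0) (staircase_col n (diff_op a s) 1)"
  using staircase_det_diff2_cols[of n s 0 a] by simp

lemma staircase_det_unit_diff_cols:
  "staircase_det n s = det_cols2 (Suc n) (\<lambda>j. staircase_col (Suc n) (diff_op a s) (int j))
                         (\<lambda>i. if i = 0 then 1 else 0) (staircase_col (Suc n) s 1)"
proof -
  have "staircase_det n s = det_cols (Suc n) (\<lambda>j. if j < 1 then (\<lambda>i. if i = 0 then 1 else 0)
                                                 else staircase_col (Suc n) s (int j + 0))"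
    unfolding staircase_det_def
    by (subst det_cols_unit_first) (auto intro!: det_cols_cong simp: staircase_col_def algebra_simps)
  also have "\<dots> = det_cols2 (Suc n) (\<lambda>j. staircase_col (Suc n) (diff_op a s) (int j))
                    (\<lambda>i. if i = 0 then 1 else 0) (staircase_col (Suc n) s 1)"
    unfolding det_cols_staircase_diff[where a = a] det_cols2_def by (rule det_cols_cong) auto
  finally show ?thesis .
qed

lemma staircase_det_shift_diff2_cols:
  assumes "normalized_seq s"
  shows "staircase_det n s
           = det_cols2 (Suc n) (\<lambda>j. staircase_col (Suc n) (diff_op b (diff_op a s)) (int j - 1))
               (staircase_col (Suc n) s (-1)) (staircase_col (Suc n) (diff_op a s) 0)"
proof -
  have "staircase_det n s = det_cols (Suc n) (\<lambda>j. if j < 0 then undefined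
                                                 else staircase_col (Suc n) s (int j + -1))"
    unfolding staircase_det_def
    by (subst det_cols_unit_last)
      (use assms in \<open>auto intro!: det_cols_cong simp: normalized_seq_def staircase_col_def algebra_simps\<close>)
  also have "\<dots> = det_cols (Suc n) (\<lambda>j. if j < 1 then staircase_col (Suc n) s (-1)
                                       else staircase_col (Suc n) (diff_op a s) (int j + -1))"
    by (subst det_cols_staircase_diff[where a = a]) (rule det_cols_cong, auto)
  also have "\<dots> = det_cols2 (Suc n) (\<lambda>j. staircase_col (Suc n) (diff_op b (diff_op a s)) (int j - 1))
                    (staircase_col (Suc n) s (-1)) (staircase_col (Suc n) (diff_op a s) 0)"
    unfolding det_cols_staircase_diff[where a = b] det_cols2_def by (rule det_cols_cong) auto
  finally show ?thesis .
qed

lemma staircase_det_shift_diff1_cols: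
  assumes "normalized_seq s"
  shows "staircase_det n s
           = det_cols2 (Suc n) (\<lambda>j. staircase_col (Suc n) (diff_op a s) (int j - 1))
               (staircase_col (Suc n) s (-1)) (staircase_col (Suc n) (diff_op a s) 0)"
  using staircase_det_shift_diff2_cols[OF assms, of n 0 a] by simp

lemma staircase_det_rotated_diff_cols:
  "staircase_det (Suc (Suc m)) s
     = (-1) ^ Suc m * det_cols2 (Suc (Suc m)) (\<lambda>j. staircase_col (Suc (Suc m)) (diff_op a s) (int j - 1))
         (staircase_col (Suc (Suc m)) (diff_op a s) (int (Suc m))) (staircase_col (Suc (Suc m)) s 0)"
proof -
  let ?N = "Suc (Suc m)"
  let ?c = "\<lambda>j. if j = 0 then staircase_col ?N s 0 else staircase_col ?N (diff_op a s) (int j)"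
  have "staircase_det ?N s = det_cols ?N ?c"
    by (rule staircase_det_diff_cols)
  also have "\<dots> = (-1) ^ Suc m * det_cols ?N (\<lambda>j. if j = 0 then ?c (Suc m) else ?c (j - 1))"
    by (rule det_cols_rotate)
  also have "det_cols ?N (\<lambda>j. if j = 0 then ?c (Suc m) else ?c (j - 1))
      = det_cols2 ?N (\<lambda>j. staircase_col ?N (diff_op a s) (int j - 1))
          (staircase_col ?N (diff_op a s) (int (Suc m))) (staircase_col ?N s 0)"
    unfolding det_cols2_def by (rule det_cols_cong) (auto simp: of_nat_diff)
  finally show ?thesis .
qed


lemma staircase_det_bilinear_lower:
  "(a - b) * staircase_det n (diff_op a (diff_op b d)) * staircase_det (Suc n) d
     = a * staircase_det n (diff_op a d) * staircase_det (Suc n) (diff_op b d)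
       - b * staircase_det n (diff_op b d) * staircase_det (Suc n) (diff_op a d)"
proof (cases n)
  case 0
  then show ?thesis by (simp add: staircase_det_Suc_0 diff_op_def algebra_simps)
next
  case (Suc m)
  define N where "N = Suc (Suc m)"
  have N: "2 \<le> N" by (simp add: N_def)
  define ga gb g where "ga = diff_op b d" and "gb = diff_op a d" and "g = diff_op a ga"
  have g_alt: "g = diff_op b gb"
    unfolding g_def ga_def gb_def by (rule diff_op_commute)
  define P where "P = det_cols2 N (\<lambda>j. staircase_col N g (int j))"
  define e0 :: "nat \<Rightarrow> 'a" where "e0 = (\<lambda>i. if i = 0 then 1 else 0)"
  define u x y D where "u = staircase_col N g 1" and "x = staircase_col N ga 0"
    and "y = staircase_col N gb 0" and "D = staircase_col N d 0"
  have ga1: "staircase_col N ga 1 = (\<lambda>i. u i + a * x i)"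
    unfolding u_def x_def g_def by (simp add: fun_eq_iff staircase_col_diff_op)
  have gb1: "staircase_col N gb 1 = (\<lambda>i. u i + b * y i)"
    unfolding u_def y_def g_alt by (simp add: fun_eq_iff staircase_col_diff_op)
  have "staircase_det n g = P e0 u"
    using staircase_det_unit_diff_cols[of n g 0] by (simp add: Suc P_def N_def e0_def u_def)
  moreover have "staircase_det n ga = P e0 (staircase_col N ga 1)"
    using staircase_det_unit_diff_cols[of n ga a] by (simp add: Suc P_def N_def e0_def g_def)
  moreover have "staircase_det n gb = P e0 (staircase_col N gb 1)"
    using staircase_det_unit_diff_cols[of n gb b] by (simp add: Suc P_def N_def e0_def g_alt)
  moreover have "staircase_det (Suc n) d = P D (staircase_col N gb 1)"
    using staircase_det_diff2_cols[of "Suc n" d b a] by (simp add: Suc P_def N_def D_def gb_def g_alt)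
  moreover have "staircase_det (Suc n) ga = P x u"
    using staircase_det_diff1_cols[of "Suc n" ga a] by (simp add: Suc P_def N_def x_def u_def g_def)
  moreover have "staircase_det (Suc n) gb = P y u"
    using staircase_det_diff1_cols[of "Suc n" gb b] by (simp add: Suc P_def N_def y_def u_def g_alt)
  moreover have "(a - b) * P e0 u * P D (\<lambda>i. u i + b * y i)
      = a * P x u * P e0 (\<lambda>i. u i + b * y i) - b * P y u * P e0 (\<lambda>i. u i + a * x i)"
    unfolding P_def
    by (rule det_cols2_three_term[OF N])
      (simp add: x_def y_def D_def ga_def gb_def staircase_col_diff_op algebra_simps)
  ultimately show ?thesis
    unfolding ga1 gb1 by (simp add: g_def ga_def gb_def mult_ac)
qed

lemma staircase_det_bilinear_upper:
  assumes "normalized_seq d"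
  shows "(a - b) * staircase_det n d * staircase_det (Suc n) (diff_op a (diff_op b d))
           = a * staircase_det n (diff_op b d) * staircase_det (Suc n) (diff_op a d)
             - b * staircase_det n (diff_op a d) * staircase_det (Suc n) (diff_op b d)"
proof (cases n)
  case 0
  then show ?thesis
    using assms by (simp add: staircase_det_Suc_0 diff_op_def normalized_seq_def algebra_simps)
next
  case (Suc m)
  define N where "N = Suc (Suc m)"
  have N: "2 \<le> N" by (simp add: N_def)
  define ga gb g where "ga = diff_op b d" and "gb = diff_op a d" and "g = diff_op a ga"
  have g_alt: "g = diff_op b gb"
    unfolding g_def ga_def gb_def by (rule diff_op_commute)
  have nga: "normalized_seq ga" and ngb: "normalized_seq gb"
    unfolding ga_def gb_def using assms by (simp_all add: normalized_seq_diff_op)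
  define P where "P = det_cols2 N (\<lambda>j. staircase_col N g (int j - 1))"
  define sg :: 'a where "sg = (-1) ^ Suc m"
  define w u x y D where "w = staircase_col N g (int (Suc m))" and "u = staircase_col N g 0"
    and "x = staircase_col N ga (-1)" and "y = staircase_col N gb (-1)" and "D = staircase_col N d (-1)"
  have ga0: "staircase_col N ga 0 = (\<lambda>i. u i + a * x i)"
    unfolding u_def x_def g_def by (simp add: fun_eq_iff staircase_col_diff_op)
  have gb0: "staircase_col N gb 0 = (\<lambda>i. u i + b * y i)"
    unfolding u_def y_def g_alt by (simp add: fun_eq_iff staircase_col_diff_op)
  have "staircase_det n ga = P x u"
    using staircase_det_shift_diff1_cols[OF nga, of n a] by (simp add: Suc P_def N_def x_def u_def g_def)
  moreover have "staircase_det n gb = P y u"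
    using staircase_det_shift_diff1_cols[OF ngb, of n b] by (simp add: Suc P_def N_def y_def u_def g_alt)
  moreover have "staircase_det n d = P D (staircase_col N gb 0)"
    using staircase_det_shift_diff2_cols[OF assms, of n b a]
    by (simp add: Suc P_def N_def D_def gb_def g_alt)
  moreover have "staircase_det (Suc n) g = sg * P w u"
    using staircase_det_rotated_diff_cols[of m g 0] by (simp add: Suc P_def N_def sg_def w_def u_def)
  moreover have "staircase_det (Suc n) ga = sg * P w (staircase_col N ga 0)"
    using staircase_det_rotated_diff_cols[of m ga a] by (simp add: Suc P_def N_def sg_def w_def g_def)
  moreover have "staircase_det (Suc n) gb = sg * P w (staircase_col N gb 0)"
    using staircase_det_rotated_diff_cols[of m gb b] by (simp add: Suc P_def N_def sg_def w_def g_alt)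
  moreover have "(a - b) * P w u * P D (\<lambda>i. u i + b * y i)
      = a * P x u * P w (\<lambda>i. u i + b * y i) - b * P y u * P w (\<lambda>i. u i + a * x i)"
    unfolding P_def
    by (rule det_cols2_three_term[OF N])
      (simp add: x_def y_def D_def ga_def gb_def staircase_col_diff_op algebra_simps)
  then have "sg * ((a - b) * P w u * P D (\<lambda>i. u i + b * y i))
      = sg * (a * P x u * P w (\<lambda>i. u i + b * y i) - b * P y u * P w (\<lambda>i. u i + a * x i))"
    by simp
  ultimately show ?thesis
    unfolding ga0 gb0 by (simp add: g_def ga_def gb_def algebra_simps)
qed

section \<open>The sequence \<open>p\<close> and its generating function\<close>

definition seq_of_fps :: "'a::zero fps \<Rightarrow> int \<Rightarrow> 'a" where
  "seq_of_fps f k = (if k < 0 then 0 else fps_nth f (nat k))"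

lemma fps_nth_diff_X_mult:
  fixes f :: "'a::comm_ring_1 fps"
  shows "fps_nth ((1 - fps_const a * fps_X) * f) n
     = (if n = 0 then fps_nth f 0 else fps_nth f n - a * fps_nth f (n - 1))"
  by (simp add: left_diff_distrib mult.assoc)

lemma diff_op_seq_of_fps:
  "diff_op a (seq_of_fps f) = seq_of_fps ((1 - fps_const a * fps_X) * f)"
  by (auto simp: fun_eq_iff diff_op_def seq_of_fps_def fps_nth_diff_X_mult nat_diff_distrib)

lemma seq_of_fps_dilate:
  fixes f :: "'a::field fps"
  shows "seq_of_fps (f oo (fps_const c * fps_X)) = (\<lambda>k. c powi k * seq_of_fps f k)"
  by (auto simp: fun_eq_iff seq_of_fps_def power_int_def)

text \<open>The power series of \<open>1 / ((1 - q) y t; q)\<^sub>\<infinity>\<close> and of \<open>(- (1 - q) t; q)\<^sub>\<infinity>\<close>.\<close>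

definition qexp_fps :: "complex \<Rightarrow> complex \<Rightarrow> complex fps" where
  "qexp_fps q y = Abs_fps (\<lambda>a. ((1 - q) * y) ^ a / qpoch q a)"

definition qExp_fps :: "complex \<Rightarrow> complex fps" where
  "qExp_fps q = Abs_fps (\<lambda>c. (1 - q) ^ c * q ^ (c * (c - 1) div 2) / qpoch q c)"

definition p_fps :: "complex \<Rightarrow> complex \<Rightarrow> complex \<Rightarrow> complex fps" where
  "p_fps q y z = qexp_fps q y * (qexp_fps q z * qExp_fps q)"

definition p_seq :: "complex \<Rightarrow> complex \<Rightarrow> complex \<Rightarrow> int \<Rightarrow> complex" where
  "p_seq q y z k = pq q k y z"

lemma qpoch_Suc: "qpoch q (Suc m) = qpoch q m * (1 - q ^ Suc m)"
  unfolding qpoch_def by simp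

lemma qpoch_nonzero:
  assumes "\<forall>n::nat. n > 0 \<longrightarrow> q ^ n \<noteq> 1"
  shows "qpoch q m \<noteq> 0"
  unfolding qpoch_def using assms by (auto simp: prod_zero_iff)

lemma qexp_fps_mult_q:
  assumes q: "\<forall>n::nat. n > 0 \<longrightarrow> q ^ n \<noteq> 1"
  shows "qexp_fps q (q * y) = (1 - fps_const ((1 - q) * y) * fps_X) * qexp_fps q y"
proof (rule fps_ext)
  fix n
  define c where "c = (1 - q) * y"
  show "fps_nth (qexp_fps q (q * y)) n = fps_nth ((1 - fps_const c * fps_X) * qexp_fps q y) n"
  proof (cases n)
    case (Suc m)
    have P: "qpoch q m \<noteq> 0" and Q: "1 - q ^ Suc m \<noteq> 0"
      using qpoch_nonzero[OF q] q by auto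
    have "fps_nth ((1 - fps_const c * fps_X) * qexp_fps q y) (Suc m)
        = c ^ Suc m / (qpoch q m * (1 - q ^ Suc m)) - c * (c ^ m / qpoch q m)"
      by (simp add: fps_nth_diff_X_mult qexp_fps_def qpoch_Suc c_def)
    also have "\<dots> = (q * c) ^ Suc m / (qpoch q m * (1 - q ^ Suc m))"
      using P Q by (simp add: field_simps power_mult_distrib)
    also have "\<dots> = fps_nth (qexp_fps q (q * y)) (Suc m)"
      by (simp add: qexp_fps_def qpoch_Suc c_def mult_ac)
    finally show ?thesis by (simp add: Suc)
  qed (simp add: qexp_fps_def qpoch_def)
qed

lemma qexp_fps_dilate: "qexp_fps q (q * y) = qexp_fps q y oo (fps_const q * fps_X)"
  by (rule fps_ext) (simp only: fps_nth_compose_linear, simp add: qexp_fps_def power_mult_distrib mult_ac)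

lemma triangular_Suc: "Suc m * m div 2 = m + m * (m - 1) div 2"
  by (cases m) (simp_all add: algebra_simps)

lemma qExp_fps_dilate:
  assumes q: "\<forall>n::nat. n > 0 \<longrightarrow> q ^ n \<noteq> 1"
  shows "qExp_fps q = (1 - fps_const (q - 1) * fps_X) * (qExp_fps q oo (fps_const q * fps_X))"
proof (rule fps_ext)
  fix n
  show "fps_nth (qExp_fps q) n = fps_nth ((1 - fps_const (q - 1) * fps_X) * (qExp_fps q oo (fps_const q * fps_X))) n"
  proof (cases n)
    case (Suc m)
    have P: "qpoch q m \<noteq> 0" and Q: "1 - q ^ Suc m \<noteq> 0"
      using qpoch_nonzero[OF q] q by auto
    have "fps_nth ((1 - fps_const (q - 1) * fps_X) * (qExp_fps q oo (fps_const q * fps_X))) (Suc m)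
        = q ^ Suc m * fps_nth (qExp_fps q) (Suc m) - (q - 1) * (q ^ m * fps_nth (qExp_fps q) m)"
      by (simp only: fps_nth_diff_X_mult fps_nth_compose_linear) simp
    also have "\<dots> = fps_nth (qExp_fps q) (Suc m)"
      unfolding qExp_fps_def fps_nth_Abs_fps diff_Suc_1 triangular_Suc power_add qpoch_Suc
      using P Q by (simp add: field_simps)
    finally show ?thesis by (simp add: Suc)
  qed (simp add: qExp_fps_def qpoch_def)
qed

lemma p_seq_eq_seq_of_fps: "p_seq q y z = seq_of_fps (p_fps q y z)"
proof
  fix k
  show "p_seq q y z k = seq_of_fps (p_fps q y z) k"
  proof (cases "k < 0")
    case False
    define n where "n = nat k"
    have "pq q k y z = (\<Sum>a\<le>n. \<Sum>b\<le>n - a. (1 - q) ^ n * (y ^ a * z ^ b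
        * q ^ ((n - a - b) * (n - a - b - 1) div 2) / (qpoch q a * qpoch q b * qpoch q (n - a - b))))"
      using False by (simp add: pq_def n_def Let_def sum_distrib_left)
    also have "\<dots> = fps_nth (p_fps q y z) n"
      unfolding p_fps_def fps_mult_nth atLeast0AtMost sum_distrib_left
    proof (intro sum.cong refl)
      fix a b assume "a \<in> {..n}" "b \<in> {..n - a}"
      then have "(1 - q) ^ n = (1 - q) ^ a * (1 - q) ^ b * (1 - q) ^ (n - a - b)"
        by (simp flip: power_add)
      then show "(1 - q) ^ n * (y ^ a * z ^ b * q ^ ((n - a - b) * (n - a - b - 1) div 2)
          / (qpoch q a * qpoch q b * qpoch q (n - a - b)))
          = fps_nth (qexp_fps q y) a * (fps_nth (qexp_fps q z) b * fps_nth (qExp_fps q) (n - a - b))"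
        by (simp add: qexp_fps_def qExp_fps_def power_mult_distrib mult_ac)
    qed
    finally show ?thesis
      using False by (simp add: p_seq_def seq_of_fps_def n_def)
  qed (simp add: p_seq_def pq_def seq_of_fps_def)
qed

lemma p_seq_diff_y:
  assumes "q \<noteq> 0" "\<forall>n::nat. n > 0 \<longrightarrow> q ^ n \<noteq> 1"
  shows "p_seq q y z = diff_op ((1 - q) * (y / q)) (p_seq q (y / q) z)"
  using qexp_fps_mult_q[OF assms(2), of "y / q"] assms(1)
  by (simp add: p_seq_eq_seq_of_fps diff_op_seq_of_fps p_fps_def mult.assoc)

lemma p_seq_diff_z:
  assumes "q \<noteq> 0" "\<forall>n::nat. n > 0 \<longrightarrow> q ^ n \<noteq> 1"
  shows "p_seq q y z = diff_op ((1 - q) * (z / q)) (p_seq q y (z / q))"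
  using qexp_fps_mult_q[OF assms(2), of "z / q"] assms(1)
  by (simp add: p_seq_eq_seq_of_fps diff_op_seq_of_fps p_fps_def mult_ac)

lemma p_seq_dilate:
  assumes "\<forall>n::nat. n > 0 \<longrightarrow> q ^ n \<noteq> 1"
  shows "p_seq q (q * y) (q * z) = diff_op (q - 1) (\<lambda>k. q powi k * p_seq q y z k)"
proof -
  have "p_fps q (q * y) (q * z) = (1 - fps_const (q - 1) * fps_X) * (p_fps q y z oo (fps_const q * fps_X))"
    unfolding p_fps_def qexp_fps_dilate
    by (subst (1) qExp_fps_dilate[OF assms]) (simp add: fps_compose_mult_distrib mult_ac)
  then show ?thesis
    by (simp add: p_seq_eq_seq_of_fps diff_op_seq_of_fps flip: seq_of_fps_dilate)
qed


lemma power_int_sum: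
  fixes x :: "'a::field"
  assumes "x \<noteq> 0"
  shows "x powi (\<Sum>i\<in>A. f i) = (\<Prod>i\<in>A. x powi f i)"
  by (induction A rule: infinite_finite_induct) (simp_all add: power_int_add assms)

lemma sum_staircase_offsets:
  assumes "p permutes {0..<n}"
  shows "(\<Sum>i=0..<n. int n - 2 * int i + int (p i)) = int (\<Sum>i\<le>n. i)"
proof -
  have "(\<Sum>i=0..<n. int (p i)) = (\<Sum>i=0..<n. int i)"
    using sum.reindex_bij_betw[OF permutes_imp_bij[OF assms], of int] by simp
  moreover have "(\<Sum>i<k. int k - int i) = int (\<Sum>i\<le>k. i)" for k
  proof (induction k)
    case (Suc k)
    have "(\<Sum>i<Suc k. int (Suc k) - int i) = (\<Sum>i<k. (int k - int i) + 1) + 1"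
      by (simp add: algebra_simps)
    also have "\<dots> = int (\<Sum>i\<le>Suc k. i)"
      using Suc unfolding sum.distrib by simp
    finally show ?case .
  qed simp
  moreover have "(\<Sum>i=0..<n. int n - 2 * int i + int (p i))
      = (\<Sum>i<n. int n - int i) + ((\<Sum>i=0..<n. int (p i)) - (\<Sum>i=0..<n. int i))"
    by (simp add: atLeast0LessThan sum.distrib sum_subtractf sum_distrib_left algebra_simps)
  ultimately show ?thesis by simp
qed

lemma staircase_det_powi_scale:
  fixes c :: "'a::field"
  assumes "c \<noteq> 0"
  shows "staircase_det n (\<lambda>k. c powi k * s k) = c ^ (\<Sum>i\<le>n. i) * staircase_det n s"
proof -
  have det: "staircase_det n t = (\<Sum>p\<in>{p. p permutes {0..<n}}.
      signof p * (\<Prod>i=0..<n. t (int n - 2 * int i + int (p i))))" for t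
    unfolding staircase_det_def det_cols_def staircase_col_def
    by (subst det_def'[of _ n]) (auto intro!: sum.cong prod.cong simp: permutes_nat_less)
  have "(\<Prod>i=0..<n. c powi (int n - 2 * int i + int (p i))) = c ^ (\<Sum>i\<le>n. i)"
    if "p permutes {0..<n}" for p
    by (simp only: power_int_sum[OF assms, symmetric] sum_staircase_offsets[OF that] power_int_of_nat)
  then show ?thesis
    unfolding det sum_distrib_left by (intro sum.cong) (simp_all add: prod.distrib mult_ac)
qed

lemma diff_op_powi_scale:
  fixes c :: "'a::field"
  assumes "c \<noteq> 0"
  shows "diff_op a (\<lambda>k. c powi k * s k) = (\<lambda>k. c powi k * diff_op (a / c) s k)"
  using assms by (auto simp: fun_eq_iff diff_op_def power_int_diff field_simps)

lemma staircase_det_p_seq_dilate: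
  assumes "q \<noteq> 0" "\<forall>n::nat. n > 0 \<longrightarrow> q ^ n \<noteq> 1"
  shows "staircase_det n (p_seq q (q * y) (q * z))
           = q ^ (\<Sum>i\<le>n. i) * staircase_det n (diff_op ((q - 1) / q) (p_seq q y z))"
  unfolding p_seq_dilate[OF assms(2)] diff_op_powi_scale[OF assms(1)]
    staircase_det_powi_scale[OF assms(1)] ..

section \<open>Bilinear equations for \<open>\<phi>\<close>\<close>

lemma normalized_seq_p_seq: "normalized_seq (p_seq q y z)"
  by (simp add: normalized_seq_def p_seq_def pq_def qpoch_def)

lemma phi_nat_eq_staircase_det: "phi_nat q n y z = staircase_det n (p_seq q y z)"
  by (simp add: phi_nat_def staircase_det_def det_cols_def staircase_col_def p_seq_def)

lemma phi_nat_bilinear_z: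
  assumes q0: "q \<noteq> 0" and q: "\<forall>n::nat. n > 0 \<longrightarrow> q ^ n \<noteq> 1"
  shows "phi_nat q m (y / q) z * phi_nat q (Suc m) y z
           + z * q ^ Suc m * phi_nat q m y z * phi_nat q (Suc m) (y / q) z
         = (1 + z) * phi_nat q m (y / q) (z / q) * phi_nat q (Suc m) y (q * z)"
    and "z * phi_nat q m (y / q) z * phi_nat q (Suc m) y z
           + q ^ Suc m * phi_nat q m y z * phi_nat q (Suc m) (y / q) z
         = q ^ Suc m * (1 + z) * phi_nat q (Suc m) (y / q) (z / q) * phi_nat q m y (q * z)"
proof -
  define dl where "dl = (1 - q) / q"
  have dl: "dl \<noteq> 0"
    using q0 q[rule_format, of 1] by (auto simp: dl_def)
  let ?T = "\<lambda>k::nat. \<Sum>i\<le>k. i"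
  define V where "V = p_seq q (y / q) (z / q)"
  define ga gb g where "ga = diff_op (z * dl) V" and "gb = diff_op (- dl) V" and "g = diff_op (- dl) ga"
  have p_ga: "p_seq q (y / q) z = ga"
    using p_seq_diff_z[OF q0 q, of "y / q" z] by (simp add: ga_def V_def dl_def mult_ac)
  have p_gb: "staircase_det k (p_seq q y z) = q ^ ?T k * staircase_det k gb" for k
    using staircase_det_p_seq_dilate[OF q0 q, of k "y / q" "z / q"] q0
    by (simp add: gb_def V_def dl_def minus_divide_left)
  have p_g: "staircase_det k (p_seq q y (q * z)) = q ^ ?T k * staircase_det k g" for k
    using staircase_det_p_seq_dilate[OF q0 q, of k "y / q" z] q0 p_ga
    by (simp add: g_def dl_def minus_divide_left)
  have "- dl * ((1 + z) * (staircase_det m g * staircase_det (Suc m) V))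
      = - dl * (staircase_det m gb * staircase_det (Suc m) ga
                + z * (staircase_det m ga * staircase_det (Suc m) gb))"
    using staircase_det_bilinear_lower[of "- dl" "z * dl" m V]
    by (simp add: g_def ga_def gb_def algebra_simps)
  then have lower: "(1 + z) * (staircase_det m g * staircase_det (Suc m) V)
      = staircase_det m gb * staircase_det (Suc m) ga + z * (staircase_det m ga * staircase_det (Suc m) gb)"
    using dl by simp
  have "- dl * ((1 + z) * (staircase_det m V * staircase_det (Suc m) g))
      = - dl * (staircase_det m ga * staircase_det (Suc m) gb
                + z * (staircase_det m gb * staircase_det (Suc m) ga))"
    using staircase_det_bilinear_upper[OF normalized_seq_p_seq[of q "y / q" "z / q"], of "- dl" "z * dl" m]
    by (simp add: g_def ga_def gb_def V_def algebra_simps)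
  then have upper: "(1 + z) * (staircase_det m V * staircase_det (Suc m) g)
      = staircase_det m ga * staircase_det (Suc m) gb + z * (staircase_det m gb * staircase_det (Suc m) ga)"
    using dl by simp
  have T: "q ^ ?T (Suc m) = q ^ Suc m * q ^ ?T m"
    by (simp add: power_add)
  show "phi_nat q m (y / q) z * phi_nat q (Suc m) y z
           + z * q ^ Suc m * phi_nat q m y z * phi_nat q (Suc m) (y / q) z
         = (1 + z) * phi_nat q m (y / q) (z / q) * phi_nat q (Suc m) y (q * z)"
    using arg_cong[OF upper, of "\<lambda>t. q ^ Suc m * q ^ ?T m * t"]
    unfolding phi_nat_eq_staircase_det p_ga p_gb p_g T V_def[symmetric] by (simp add: algebra_simps)
  show "z * phi_nat q m (y / q) z * phi_nat q (Suc m) y z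
           + q ^ Suc m * phi_nat q m y z * phi_nat q (Suc m) (y / q) z
         = q ^ Suc m * (1 + z) * phi_nat q (Suc m) (y / q) (z / q) * phi_nat q m y (q * z)"
    using arg_cong[OF lower, of "\<lambda>t. q ^ Suc m * q ^ ?T m * t"]
    unfolding phi_nat_eq_staircase_det p_ga p_gb p_g T V_def[symmetric] by (simp add: algebra_simps)
qed


lemma phi_nat_bilinear_yz_ne:
  assumes q0: "q \<noteq> 0" and q: "\<forall>n::nat. n > 0 \<longrightarrow> q ^ n \<noteq> 1" and yz: "y \<noteq> z"
  shows "y * phi_nat q m y z * phi_nat q (Suc m) (y / q) (z / q)
           + z * phi_nat q m (y / q) (z / q) * phi_nat q (Suc m) y z
         = (y + z) * phi_nat q m y (z / q) * phi_nat q (Suc m) (y / q) z"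
    and "z * phi_nat q m y z * phi_nat q (Suc m) (y / q) (z / q)
           + y * phi_nat q m (y / q) (z / q) * phi_nat q (Suc m) y z
         = (y + z) * phi_nat q (Suc m) y (z / q) * phi_nat q m (y / q) z"
proof -
  define dl where "dl = (1 - q) / q"
  have dl: "dl \<noteq> 0"
    using q0 q[rule_format, of 1] by (auto simp: dl_def)
  define V where "V = p_seq q (y / q) (z / q)"
  have ga: "p_seq q (y / q) z = diff_op (z * dl) V"
    using p_seq_diff_z[OF q0 q, of "y / q" z] by (simp add: V_def dl_def mult_ac)
  have gb: "p_seq q y (z / q) = diff_op (y * dl) V"
    using p_seq_diff_y[OF q0 q, of y "z / q"] by (simp add: V_def dl_def mult_ac)
  have g: "p_seq q y z = diff_op (y * dl) (diff_op (z * dl) V)"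
    using p_seq_diff_y[OF q0 q, of y z] by (simp add: ga dl_def mult_ac)
  define X Y W W' where "X = phi_nat q m y z * phi_nat q (Suc m) (y / q) (z / q)"
    and "Y = phi_nat q m (y / q) (z / q) * phi_nat q (Suc m) y z"
    and "W = phi_nat q m y (z / q) * phi_nat q (Suc m) (y / q) z"
    and "W' = phi_nat q m (y / q) z * phi_nat q (Suc m) y (z / q)"
  have "dl * ((y - z) * X) = dl * (y * W - z * W')"
    using staircase_det_bilinear_lower[of "y * dl" "z * dl" m V]
    unfolding X_def W_def W'_def phi_nat_eq_staircase_det ga gb g V_def[symmetric]
    by (simp add: algebra_simps)
  then have X: "(y - z) * X = y * W - z * W'"
    using dl by simp
  have "dl * ((y - z) * Y) = dl * (y * W' - z * W)"
    using staircase_det_bilinear_upper[OF normalized_seq_p_seq[of q "y / q" "z / q"], of "y * dl" "z * dl" m]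
    unfolding Y_def W_def W'_def phi_nat_eq_staircase_det ga gb g V_def[symmetric]
    by (simp add: algebra_simps)
  then have Y: "(y - z) * Y = y * W' - z * W"
    using dl by simp
  have "(y - z) * (y * X + z * Y) = y * ((y - z) * X) + z * ((y - z) * Y)"
    by (simp add: algebra_simps)
  also have "\<dots> = (y - z) * ((y + z) * W)"
    unfolding X Y by (simp add: algebra_simps)
  finally have "(y - z) * (y * X + z * Y) = (y - z) * ((y + z) * W)" .
  then show "y * phi_nat q m y z * phi_nat q (Suc m) (y / q) (z / q)
           + z * phi_nat q m (y / q) (z / q) * phi_nat q (Suc m) y z
         = (y + z) * phi_nat q m y (z / q) * phi_nat q (Suc m) (y / q) z"
    using yz by (simp add: X_def Y_def W_def mult.assoc)
  have "(y - z) * (z * X + y * Y) = z * ((y - z) * X) + y * ((y - z) * Y)"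
    by (simp add: algebra_simps)
  also have "\<dots> = (y - z) * ((y + z) * W')"
    unfolding X Y by (simp add: algebra_simps)
  finally have "(y - z) * (z * X + y * Y) = (y - z) * ((y + z) * W')" .
  then show "z * phi_nat q m y z * phi_nat q (Suc m) (y / q) (z / q)
           + y * phi_nat q m (y / q) (z / q) * phi_nat q (Suc m) y z
         = (y + z) * phi_nat q (Suc m) y (z / q) * phi_nat q m (y / q) z"
    using yz by (simp add: X_def Y_def W'_def mult_ac)
qed

lemma continuous_on_pq: "continuous_on UNIV g \<Longrightarrow> continuous_on UNIV (\<lambda>w. pq q k y (g w))"
  unfolding pq_def Let_def divide_inverse
  by (cases "k < 0") (auto intro!: continuous_intros)

lemma continuous_on_phi_nat:
  assumes "continuous_on UNIV g"
  shows "continuous_on UNIV (\<lambda>w. phi_nat q n y (g w))"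
proof -
  have "phi_nat q n y (g w) = (if n = 0 then 1 else (\<Sum>p\<in>{p. p permutes {0..<n}}.
      signof p * (\<Prod>i=0..<n. pq q (int n - 2 * int i + int (p i)) y (g w))))" for w
    unfolding phi_nat_def
    by (subst det_def'[of _ n]) (auto intro!: sum.cong prod.cong simp: permutes_nat_less)
  moreover have "continuous_on UNIV (\<lambda>w. if n = 0 then 1 else (\<Sum>p\<in>{p. p permutes {0..<n}}.
      signof p * (\<Prod>i=0..<n. pq q (int n - 2 * int i + int (p i)) y (g w))))"
    by (cases "n = 0") (auto intro!: continuous_intros continuous_on_pq[OF assms])
  ultimately show ?thesis by simp
qed

lemma continuous_eq_off_point:
  fixes f g :: "'a::perfect_space \<Rightarrow> 'b::t2_space"
  assumes "continuous_on UNIV f" "continuous_on UNIV g" "\<And>w. w \<noteq> c \<Longrightarrow> f w = g w"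
  shows "f x = g x"
proof (cases "x = c")
  case True
  have "(f \<longlongrightarrow> f c) (at c)" "(g \<longlongrightarrow> g c) (at c)"
    using assms(1,2) by (auto simp: continuous_on_def)
  moreover have "eventually (\<lambda>w. f w = g w) (at c)"
    using assms(3) by (auto simp: eventually_at_filter)
  ultimately have "(g \<longlongrightarrow> f c) (at c)" "(g \<longlongrightarrow> g c) (at c)"
    using tendsto_cong by blast+
  then show ?thesis
    using True tendsto_unique[OF at_neq_bot] by blast
qed (use assms(3) in simp)

lemma phi_nat_bilinear_yz:
  assumes q0: "q \<noteq> 0" and q: "\<forall>n::nat. n > 0 \<longrightarrow> q ^ n \<noteq> 1"
  shows "y * phi_nat q m y z * phi_nat q (Suc m) (y / q) (z / q)
           + z * phi_nat q m (y / q) (z / q) * phi_nat q (Suc m) y z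
         = (y + z) * phi_nat q m y (z / q) * phi_nat q (Suc m) (y / q) z"
    and "z * phi_nat q m y z * phi_nat q (Suc m) (y / q) (z / q)
           + y * phi_nat q m (y / q) (z / q) * phi_nat q (Suc m) y z
         = (y + z) * phi_nat q (Suc m) y (z / q) * phi_nat q m (y / q) z"
proof -
  have "continuous_on UNIV (\<lambda>w. w / q)"
    using q0 by (intro continuous_intros) auto
  note cont = continuous_on_phi_nat[OF continuous_on_id] continuous_on_phi_nat[OF this]
  show "y * phi_nat q m y z * phi_nat q (Suc m) (y / q) (z / q)
           + z * phi_nat q m (y / q) (z / q) * phi_nat q (Suc m) y z
         = (y + z) * phi_nat q m y (z / q) * phi_nat q (Suc m) (y / q) z"
    by (rule continuous_eq_off_point[where c = y])
      (auto intro!: continuous_intros cont phi_nat_bilinear_yz_ne(1)[OF q0 q])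
  show "z * phi_nat q m y z * phi_nat q (Suc m) (y / q) (z / q)
           + y * phi_nat q m (y / q) (z / q) * phi_nat q (Suc m) y z
         = (y + z) * phi_nat q (Suc m) y (z / q) * phi_nat q m (y / q) z"
    by (rule continuous_eq_off_point[where c = y])
      (auto intro!: continuous_intros cont phi_nat_bilinear_yz_ne(2)[OF q0 q])
qed


lemma phi_bilinear:
  assumes q0: "q \<noteq> 0" and q: "\<forall>n::nat. n > 0 \<longrightarrow> q ^ n \<noteq> 1"
  shows "phi q (N - 1) (y / q) z * phi q N y z + z * q powi N * phi q (N - 1) y z * phi q N (y / q) z
           = (1 + z) * phi q (N - 1) (y / q) (z / q) * phi q N y (q * z)"  (is ?E1)
    and "z * phi q (N - 1) (y / q) z * phi q N y z + q powi N * phi q (N - 1) y z * phi q N (y / q) z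
           = q powi N * (1 + z) * phi q N (y / q) (z / q) * phi q (N - 1) y (q * z)"  (is ?E2)
    and "y * phi q (N - 1) y z * phi q N (y / q) (z / q) + z * phi q (N - 1) (y / q) (z / q) * phi q N y z
           = (y + z) * phi q (N - 1) y (z / q) * phi q N (y / q) z"  (is ?E3)
    and "z * phi q (N - 1) y z * phi q N (y / q) (z / q) + y * phi q (N - 1) (y / q) (z / q) * phi q N y z
           = (y + z) * phi q N y (z / q) * phi q (N - 1) (y / q) z"  (is ?E4)
proof -
  have "?E1 \<and> ?E2 \<and> ?E3 \<and> ?E4"
  proof (cases N "0 :: int" rule: linorder_cases)
    case greater
    define m where "m = nat (N - 1)"
    have phi: "phi q N y' z' = phi_nat q (Suc m) y' z'" "phi q (N - 1) y' z' = phi_nat q m y' z'" for y' z'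
      using greater by (simp_all add: phi_def m_def Suc_nat_eq_nat_zadd1)
    have "q powi N = q ^ Suc m"
      using greater by (simp add: m_def power_int_def Suc_nat_eq_nat_zadd1)
    then show ?thesis
      unfolding phi using phi_nat_bilinear_z[OF q0 q] phi_nat_bilinear_yz[OF q0 q] by simp
  next
    case equal
    then show ?thesis by (simp add: phi_def phi_nat_def algebra_simps)
  next
    case less
    \<comment> \<open>The symmetry exchanges the roles of \<open>E1, E2\<close> and of \<open>E3, E4\<close>; the signs cancel.\<close>
    define m where "m = nat (- N - 1)"
    define s1 s2 :: complex where "s1 = (-1) ^ nat (N * (N + 1) div 2)"
      and "s2 = (-1) ^ nat ((N - 1) * N div 2)"
    have phi: "phi q N y' z' = s1 * phi_nat q m y' z'" "phi q (N - 1) y' z' = s2 * phi_nat q (Suc m) y' z'"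
      for y' z'
      using less by (simp_all add: phi_def s1_def s2_def m_def Suc_nat_eq_nat_zadd1)
    have Q: "q ^ Suc m \<noteq> 0" and powi: "q powi N = 1 / q ^ Suc m"
      using less q0 by (simp_all add: m_def power_int_def Suc_nat_eq_nat_zadd1 field_simps)
    note nat_eqs = phi_nat_bilinear_z[OF q0 q, where m = m and y = y and z = z]
      phi_nat_bilinear_yz[OF q0 q, where m = m and y = y and z = z]
    have ?E1
      using arg_cong[OF nat_eqs(2), of "\<lambda>t. s1 * s2 * t / q ^ Suc m"] Q
      unfolding phi powi by (simp add: field_simps)
    moreover have ?E2
      using arg_cong[OF nat_eqs(1), of "\<lambda>t. s1 * s2 * t / q ^ Suc m"] Q
      unfolding phi powi by (simp add: field_simps)
    moreover have ?E3
      using arg_cong[OF nat_eqs(4), of "\<lambda>t. s1 * s2 * t"]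
      unfolding phi by (simp add: algebra_simps)
    moreover have ?E4
      using arg_cong[OF nat_eqs(3), of "\<lambda>t. s1 * s2 * t"]
      unfolding phi by (simp add: algebra_simps)
    ultimately show ?thesis by blast
  qed
  then show ?E1 ?E2 ?E3 ?E4 by blast+
qed

section \<open>The \<open>q\<close>-Painleve III equations\<close>

lemma qPIII_first_from_bilinear:
  fixes A B C D E F G H p z f0 f1 :: complex
  assumes nz: "A \<noteq> 0" "B \<noteq> 0" "C \<noteq> 0" "D \<noteq> 0" "E \<noteq> 0" "F \<noteq> 0" "H \<noteq> 0" "p \<noteq> 0"
    and f0: "f0 = p * (C * D) / (A * B)" and f1: "f1 = E * B / (C * F)"
    and E1: "A * B + z * p * C * D = (1 + z) * E * G"
    and E2: "z * A * B + p * C * D = p * (1 + z) * F * H"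
    and zf: "z + f0 \<noteq> 0"
  shows "A * G / (H * D) = p ^ 2 / (f0 * f1) * ((1 + z * f0) / (z + f0))"
proof -
  define w where "w = 1 + z"
  have num: "1 + z * f0 = w * E * G / (A * B)"
    unfolding f0 w_def E1[symmetric] using nz by (simp add: field_simps)
  have den: "z + f0 = p * w * F * H / (A * B)"
    unfolding f0 w_def E2[symmetric] using nz by (simp add: field_simps)
  have "w \<noteq> 0"
    using zf unfolding den by auto
  then have ratio: "(1 + z * f0) / (z + f0) = E * G / (p * F * H)"
    unfolding num den using nz by (simp add: field_simps)
  have prod: "f0 * f1 = p * D * E / (A * F)"
    unfolding f0 f1 using nz by (simp add: field_simps)
  show ?thesis
    unfolding ratio prod using nz by (simp add: field_simps power2_eq_square)
qed

lemma qPIII_second_from_bilinear: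
  fixes A B C D E F K L p y z f0 f1 :: complex
  assumes nz: "A \<noteq> 0" "B \<noteq> 0" "C \<noteq> 0" "D \<noteq> 0" "E \<noteq> 0" "F \<noteq> 0" "L \<noteq> 0" "p \<noteq> 0" "z \<noteq> 0"
    and f0: "f0 = p * (C * D) / (A * B)" and f1: "f1 = E * B / (C * F)"
    and E3: "y * C * F + z * E * B = (y + z) * K * D"
    and E4: "z * C * F + y * E * B = (y + z) * L * A"
    and yf: "1 + (y / z) * f1 \<noteq> 0"
  shows "p * (K * F) / (E * L) = p ^ 2 / (f0 * f1) * ((y / z + f1) / (1 + (y / z) * f1))"
proof -
  define w where "w = y + z"
  have num: "y / z + f1 = w * K * D / (z * C * F)"
    unfolding f1 w_def E3[symmetric] using nz by (simp add: field_simps)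
  have den: "1 + (y / z) * f1 = w * L * A / (z * C * F)"
    unfolding f1 w_def E4[symmetric] using nz by (simp add: field_simps)
  have "w \<noteq> 0"
    using yf unfolding den by auto
  then have ratio: "(y / z + f1) / (1 + (y / z) * f1) = K * D / (L * A)"
    unfolding num den using nz by (simp add: field_simps)
  have prod: "f0 * f1 = p * D * E / (A * F)"
    unfolding f0 f1 using nz by (simp add: field_simps)
  show ?thesis
    unfolding ratio prod using nz by (simp add: field_simps power2_eq_square)
qed

theorem theorem4:
  fixes q y z :: complex and N :: int
  assumes "q \<noteq> 0" and "\<forall>n::nat. n > 0 \<longrightarrow> q ^ n \<noteq> 1"
    and "z \<noteq> 0"
    and "phi q (N - 1) (y / q) z \<noteq> 0" and "phi q N y z \<noteq> 0"
    and "phi q (N - 1) y z \<noteq> 0" and "phi q N (y / q) (z / q) \<noteq> 0"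
    and "f0 q N y z * f1 q N y z \<noteq> 0"
  shows "(phi q (N - 1) y (q * z) \<noteq> 0 \<and> phi q N (y / q) z \<noteq> 0 \<and> z + f0 q N y z \<noteq> 0 \<longrightarrow>
           f1 q N y (q * z) = (q powi N) ^ 2 / (f0 q N y z * f1 q N y z)
              * ((1 + z * f0 q N y z) / (z + f0 q N y z)))
       \<and> (phi q (N - 1) (y / q) (z / q) \<noteq> 0 \<and> phi q N y (z / q) \<noteq> 0
           \<and> 1 + (y / z) * f1 q N y z \<noteq> 0 \<longrightarrow>
           f0 q N y (z / q) = (q powi N) ^ 2 / (f0 q N y z * f1 q N y z)
              * ((y / z + f1 q N y z) / (1 + (y / z) * f1 q N y z)))"
proof -
  note f0_def' = f0_def[of q N y z] and f1_def' = f1_def[of q N y z]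
  have "f0 q N y z \<noteq> 0" "f1 q N y z \<noteq> 0"
    using assms(8) by auto
  then have "q powi N \<noteq> 0" "phi q N (y / q) z \<noteq> 0" "phi q (N - 1) (y / q) (z / q) \<noteq> 0"
    unfolding f0_def' f1_def' by auto
  note nz = assms(4-7) this
  note E = phi_bilinear[OF assms(1,2), where N = N and y = y and z = z]
  show ?thesis
  proof (intro conjI impI)
    assume "phi q (N - 1) y (q * z) \<noteq> 0 \<and> phi q N (y / q) z \<noteq> 0 \<and> z + f0 q N y z \<noteq> 0"
    then show "f1 q N y (q * z) = (q powi N) ^ 2 / (f0 q N y z * f1 q N y z)
        * ((1 + z * f0 q N y z) / (z + f0 q N y z))"
      using qPIII_first_from_bilinear[OF nz(1,2,3,6,7,4) _ nz(5) f0_def' f1_def' E(1,2)] assms(1)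
      by (simp add: f1_def)
  next
    assume "phi q (N - 1) (y / q) (z / q) \<noteq> 0 \<and> phi q N y (z / q) \<noteq> 0 \<and> 1 + y / z * f1 q N y z \<noteq> 0"
    then show "f0 q N y (z / q) = (q powi N) ^ 2 / (f0 q N y z * f1 q N y z)
        * ((y / z + f1 q N y z) / (1 + y / z * f1 q N y z))"
      using qPIII_second_from_bilinear[OF nz(1,2,3,6,7,4) _ nz(5) assms(3) f0_def' f1_def' E(3,4)]
      by (simp add: f0_def)
  qed
qed

end
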